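(* Let $\vec\kappa=(\kappa_0,\kappa_1,\kappa_\infty,\theta_1,\ldots,\theta_N)$ and $R_\tau(\vec\kappa)=(1-\kappa_0,1-\kappa_1,-\kappa_\infty,-\theta_1,\ldots,-\theta_N)$. Define the birational transformation $R_\tau:(q,p)\mapsto(Q,P)$ by $$Q_i=\frac{s_ip_i(q_ip_i-\theta_i)}{(\alpha+\sum_jq_jp_j)(\alpha+\kappa_\infty+\sum_jq_jp_j)},\qquad Q_iP_i=-q_ip_i\quad(i=1,\dots,N),$$ with $\alpha=\alpha(\vec\kappa)$, and put $\widetilde H_i=H_i(q,p,s;\vec\kappa)-\dfrac{q_ip_i}{s_i}$. Then (i) $\sum_i\big(dp_i\wedge dq_i-dH_i\wedge ds_i\big)=\sum_i\big(dP_i\wedge dQ_i-d\widetilde H_i\wedge ds_i\big)$ as 2-forms in the variables $(q,p,s)$, where $H_i=H_i(q,p,s;\vec\kappa)$; (ii) $\widetilde H_i=H_i(Q,P,s;R_\tau(\vec\kappa))$ for $i=1,\dots,N$. Thus $R_\tau$ is a birational canonical transformation from $\mathcal H_N(q,p,s,H;\vec\kappa)$ to $\mathcal H_N(Q,P,s,\widetilde H;R_\tau(\vec\kappa))$, and in particular it maps solutions of $\mathcal H_N(\vec\kappa)$ to solutions of $\mathcal H_N(R_\tau(\vec\kappa))$.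
   Context: For $\vec\kappa=(\kappa_0,\kappa_1,\kappa_\infty,\theta_1,\ldots,\theta_N)\in\mathbb C^{N+3}$ put $\alpha=\alpha(\vec\kappa)=-\frac12(\kappa_0+\kappa_1+\kappa_\infty+\sum_{i=1}^N\theta_i-1)$, $R_{ij}=s_i(s_j-1)/(s_j-s_i)$, $S_{ij}=s_i(s_i-1)/(s_i-s_j)$. Define $H_i=H_i(q,p,s;\vec\kappa)$, $i=1,\dots,N$, by $s_i(s_i-1)H_i=q_i(\alpha+\sum_j q_jp_j)(\alpha+\kappa_\infty+\sum_j q_jp_j)+s_ip_i(q_ip_i-\theta_i)-\sum_{j\neq i}R_{ji}(q_jp_j-\theta_j)q_ip_j-\sum_{j\neq i}S_{ij}(q_ip_i-\theta_i)q_jp_i-\sum_{j\neq i}R_{ij}q_jp_j(q_ip_i-\theta_i)-\sum_{j\neq i}R_{ij}q_ip_i(q_jp_j-\theta_j)-(s_i+1)(q_ip_i-\theta_i)q_ip_i+(\kappa_1s_i+\kappa_0-1)q_ip_i$, where $\sum_j$ runs over $j=1,\dots,N$ and $\sum_{j\ne i}$ omits $j=i$. The Garnier system $\mathcal H_N(\vec\kappa)$ is the Hamiltonian system $\partial q_i/\partial s_j=\partial H_j/\partial p_i$, $\partial p_i/\partial s_j=-\partial H_j/\partial q_i$ ($i,j=1,\dots,N$) for functions $q_i(s),p_i(s)$ of $s=(s_1,\dots,s_N)$. *)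

theory Defs
  imports "HOL-Analysis.Analysis"
begin

text \<open>The index set {1..N} is a finite type 'n (N = CARD('n)).\<close>

definition galpha :: "complex \<Rightarrow> complex \<Rightarrow> complex \<Rightarrow> complex^'n::finite \<Rightarrow> complex" where
  "galpha k0 k1 kinf th = - (k0 + k1 + kinf + (\<Sum>i\<in>UNIV. th $ i) - 1) / 2"

definition gR :: "complex^'n::finite \<Rightarrow> 'n \<Rightarrow> 'n \<Rightarrow> complex" where
  "gR s i j = s $ i * (s $ j - 1) / (s $ j - s $ i)"

definition gS :: "complex^'n::finite \<Rightarrow> 'n \<Rightarrow> 'n \<Rightarrow> complex" where
  "gS s i j = s $ i * (s $ i - 1) / (s $ i - s $ j)"

definition qp_sum :: "complex^'n::finite \<Rightarrow> complex^'n \<Rightarrow> complex" where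
  "qp_sum q p = (\<Sum>j\<in>UNIV. q $ j * p $ j)"

text \<open>The Garnier Hamiltonian H_i, defined via
  s_i (s_i - 1) H_i = (right-hand side); i.e. H_i = RHS / (s_i (s_i - 1)).\<close>
definition garnierH ::
  "complex \<Rightarrow> complex \<Rightarrow> complex \<Rightarrow> complex^'n::finite \<Rightarrow>
   complex^'n \<Rightarrow> complex^'n \<Rightarrow> complex^'n \<Rightarrow> 'n \<Rightarrow> complex" where
  "garnierH k0 k1 kinf th q p s i =
     (let a = galpha k0 k1 kinf th; E = qp_sum q p in
      (q $ i * (a + E) * (a + kinf + E)
       + s $ i * p $ i * (q $ i * p $ i - th $ i)
       - (\<Sum>j\<in>UNIV - {i}. gR s j i * (q $ j * p $ j - th $ j) * q $ i * p $ j)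
       - (\<Sum>j\<in>UNIV - {i}. gS s i j * (q $ i * p $ i - th $ i) * q $ j * p $ i)
       - (\<Sum>j\<in>UNIV - {i}. gR s i j * q $ j * p $ j * (q $ i * p $ i - th $ i))
       - (\<Sum>j\<in>UNIV - {i}. gR s i j * q $ i * p $ i * (q $ j * p $ j - th $ j))
       - (s $ i + 1) * (q $ i * p $ i - th $ i) * q $ i * p $ i
       + (k1 * s $ i + k0 - 1) * q $ i * p $ i)
      / (s $ i * (s $ i - 1)))"

definition RtauQ ::
  "complex \<Rightarrow> complex \<Rightarrow> complex \<Rightarrow> complex^'n::finite \<Rightarrow>
   complex^'n \<Rightarrow> complex^'n \<Rightarrow> complex^'n \<Rightarrow> 'n \<Rightarrow> complex" where
  "RtauQ k0 k1 kinf th q p s i =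
     (let a = galpha k0 k1 kinf th; E = qp_sum q p in
      s $ i * p $ i * (q $ i * p $ i - th $ i) / ((a + E) * (a + kinf + E)))"

definition RtauP ::
  "complex \<Rightarrow> complex \<Rightarrow> complex \<Rightarrow> complex^'n::finite \<Rightarrow>
   complex^'n \<Rightarrow> complex^'n \<Rightarrow> complex^'n \<Rightarrow> 'n \<Rightarrow> complex" where
  "RtauP k0 k1 kinf th q p s i = - q $ i * p $ i / RtauQ k0 k1 kinf th q p s i"

definition Htilde ::
  "complex \<Rightarrow> complex \<Rightarrow> complex \<Rightarrow> complex^'n::finite \<Rightarrow>
   complex^'n \<Rightarrow> complex^'n \<Rightarrow> complex^'n \<Rightarrow> 'n \<Rightarrow> complex" where
  "Htilde k0 k1 kinf th q p s i = garnierH k0 k1 kinf th q p s i - q $ i * p $ i / s $ i"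

text \<open>Generic (open, dense) domain where all the rational expressions are defined:
  s_i \<notin> {0,1}, s_i pairwise distinct, both factors of the denominator of Q_i nonzero,
  and Q_i \<noteq> 0 (i.e. p_i \<noteq> 0 and q_i p_i \<noteq> theta_i).\<close>
definition garnier_dom ::
  "complex \<Rightarrow> complex \<Rightarrow> complex \<Rightarrow> complex^'n::finite \<Rightarrow>
   ((complex^'n) \<times> (complex^'n) \<times> (complex^'n)) set" where
  "garnier_dom k0 k1 kinf th =
     {(q, p, s). (\<forall>i. s $ i \<noteq> 0 \<and> s $ i \<noteq> 1 \<and> p $ i \<noteq> 0 \<and> q $ i * p $ i \<noteq> th $ i)
        \<and> (\<forall>i j. i \<noteq> j \<longrightarrow> s $ i \<noteq> s $ j)
        \<and> galpha k0 k1 kinf th + qp_sum q p \<noteq> 0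
        \<and> galpha k0 k1 kinf th + kinf + qp_sum q p \<noteq> 0}"

definition wedge_d ::
  "('a::real_normed_vector \<Rightarrow> complex) \<Rightarrow> ('a \<Rightarrow> complex) \<Rightarrow> 'a \<Rightarrow> 'a \<Rightarrow> 'a \<Rightarrow> complex" where
  "wedge_d f g z u v =
     frechet_derivative f (at z) u * frechet_derivative g (at z) v
     - frechet_derivative f (at z) v * frechet_derivative g (at z) u"

end

theory Submission
  imports Defs
begin

(*
  R_tau rescales every canonical pair: Q_i = c_i p_i and P_i = - q_i / c_i with
  c_i = s_i (q_i p_i - theta_i) / ((alpha + E) (alpha + kappa_inf + E)), E = sum_j q_j p_j.
  Hence Q_i P_i = - q_i p_i, and both E and alpha change sign.

  (i) Since P_i = - q_i p_i / Q_i, we get dP_i /\ dQ_i = - d(q_i p_i) /\ d log Q_i, and expanding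
  the logarithmic derivative of Q_i gives
    dP_i /\ dQ_i = dp_i /\ dq_i - d(q_i p_i) /\ ds_i / s_i
                   + (1 / (alpha + E) + 1 / (alpha + kappa_inf + E)) d(q_i p_i) /\ dE.
  The ds_i-term is absorbed by the correction q_i p_i / s_i of the new Hamiltonian, and the last
  terms add up over i to a multiple of dE /\ dE = 0.

  (ii) In the numerator of H_i the first two terms are exchanged by R_tau, and so are the two sums
  with mixed indices, because R_ji s_i = S_ij s_j. Each remaining term but the last is a product of
  two factors of the form q_j p_j or q_j p_j - theta_j, both of which change sign; the last one,
  (kappa_1 s_i + kappa_0 - 1) q_i p_i, changes by -(s_i - 1) q_i p_i, which is - q_i p_i / s_i
  after division by s_i (s_i - 1).
*)

lemma wedge_d_has_derivative:
  assumes "(f has_derivative f') (at z)" and "(g has_derivative g') (at z)"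
  shows "wedge_d f g z u v = f' u * g' v - f' v * g' u"
  unfolding wedge_d_def frechet_derivative_at[OF assms(1), symmetric]
    frechet_derivative_at[OF assms(2), symmetric] ..

lemma wedge_d_self: "wedge_d f f z u v = 0"
  by (simp add: wedge_d_def)

lemma wedge_d_commute: "wedge_d f g z u v = - wedge_d g f z u v"
  by (simp add: wedge_d_def)

lemma wedge_d_minus_left:
  assumes "f differentiable at z"
  shows "wedge_d (\<lambda>x. - f x) g z u v = - wedge_d f g z u v"
proof -
  have "((\<lambda>x. - f x) has_derivative (\<lambda>h. - frechet_derivative f (at z) h)) (at z)"
    using assms by (intro has_derivative_minus) (simp add: frechet_derivative_works)
  then show ?thesis
    by (simp add: wedge_d_def frechet_derivative_at[symmetric] algebra_simps)
qed

lemma wedge_d_diff_left: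
  assumes "f differentiable at z" and "g differentiable at z"
  shows "wedge_d (\<lambda>x. f x - g x) h z u v = wedge_d f h z u v - wedge_d g h z u v"
proof -
  have "((\<lambda>x. f x - g x) has_derivative
      (\<lambda>y. frechet_derivative f (at z) y - frechet_derivative g (at z) y)) (at z)"
    using assms by (intro has_derivative_diff) (simp_all add: frechet_derivative_works)
  then show ?thesis
    by (simp add: wedge_d_def frechet_derivative_at[symmetric] algebra_simps)
qed

lemma wedge_d_sum_left:
  assumes "finite I" and "\<And>i. i \<in> I \<Longrightarrow> f i differentiable at z"
  shows "wedge_d (\<lambda>x. \<Sum>i\<in>I. f i x) g z u v = (\<Sum>i\<in>I. wedge_d (f i) g z u v)"
proof -
  have "((\<lambda>x. \<Sum>i\<in>I. f i x) has_derivative (\<lambda>y. \<Sum>i\<in>I. frechet_derivative (f i) (at z) y)) (at z)"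
    using assms(2) by (intro has_derivative_sum) (simp add: frechet_derivative_works)
  then show ?thesis
    by (simp add: wedge_d_def frechet_derivative_at[symmetric] sum_distrib_left sum_distrib_right
        sum_subtractf algebra_simps)
qed

lemma wedge_d_divide_left:
  assumes "f differentiable at z" and "g differentiable at z" and "g z \<noteq> 0"
  shows "wedge_d (\<lambda>x. f x / g x) g z u v = wedge_d f g z u v / g z"
proof -
  have "((\<lambda>x. f x / g x) has_derivative (\<lambda>y. (frechet_derivative f (at z) y * g z
      - f z * frechet_derivative g (at z) y) / (g z * g z))) (at z)"
    using assms by (intro has_derivative_divide') (simp_all add: frechet_derivative_works)
  then show ?thesis
    using assms(3) by (simp add: wedge_d_def frechet_derivative_at[symmetric] field_simps)
qed

type_synonym 'n phase_point = "(complex^'n) \<times> (complex^'n) \<times> (complex^'n)"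

lemma has_derivative_vec_nth [derivative_intros]:
  "(f has_derivative f') F \<Longrightarrow> ((\<lambda>x. f x $ i) has_derivative (\<lambda>x. f' x $ i)) F"
  by (rule bounded_linear.has_derivative[OF bounded_linear_vec_nth])

lemma has_derivative_coordinates:
  fixes z :: "'n::finite phase_point"
  shows "((\<lambda>(q, p, s). q $ i) has_derivative (\<lambda>(dq, dp, ds). dq $ i)) (at z)"
    and "((\<lambda>(q, p, s). p $ i) has_derivative (\<lambda>(dq, dp, ds). dp $ i)) (at z)"
    and "((\<lambda>(q, p, s). s $ i) has_derivative (\<lambda>(dq, dp, ds). ds $ i)) (at z)"
  unfolding case_prod_unfold by (auto intro!: derivative_eq_intros)

lemma has_derivative_qp:
  fixes q p s :: "complex^'n::finite"
  shows "((\<lambda>(q, p, s). q $ i * p $ i) has_derivative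
      (\<lambda>(dq, dp, ds). dq $ i * p $ i + q $ i * dp $ i)) (at (q, p, s))"
  unfolding case_prod_unfold by (auto intro!: derivative_eq_intros)

lemma has_derivative_qp_sum:
  fixes q p s :: "complex^'n::finite"
  shows "((\<lambda>(q, p, s). qp_sum q p) has_derivative
      (\<lambda>(dq, dp, ds). \<Sum>j\<in>UNIV. dq $ j * p $ j + q $ j * dp $ j)) (at (q, p, s))"
  unfolding case_prod_unfold qp_sum_def
  by (auto intro!: derivative_eq_intros simp: add.commute)

lemma has_derivative_RtauQ:
  fixes q p s :: "complex^'n::finite"
  assumes "(q, p, s) \<in> garnier_dom k0 k1 kinf th"
  defines "A \<equiv> galpha k0 k1 kinf th + qp_sum q p" and "B \<equiv> galpha k0 k1 kinf th + kinf + qp_sum q p"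
  shows "((\<lambda>(q, p, s). RtauQ k0 k1 kinf th q p s i) has_derivative
      (\<lambda>(dq, dp, ds). RtauQ k0 k1 kinf th q p s i *
        (ds $ i / s $ i + dp $ i / p $ i + (dq $ i * p $ i + q $ i * dp $ i) / (q $ i * p $ i - th $ i)
         - (1 / A + 1 / B) * (\<Sum>j\<in>UNIV. dq $ j * p $ j + q $ j * dp $ j)))) (at (q, p, s))"
proof -
  have nonzero: "s $ i \<noteq> 0" "p $ i \<noteq> 0" "q $ i * p $ i - th $ i \<noteq> 0" "A \<noteq> 0" "B \<noteq> 0"
    using assms by (auto simp: garnier_dom_def)
  define dE :: "'n phase_point \<Rightarrow> complex"
    where "dE = (\<lambda>h. \<Sum>j\<in>UNIV. fst h $ j * p $ j + q $ j * fst (snd h) $ j)"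
  have E: "((\<lambda>x. qp_sum (fst x) (fst (snd x))) has_derivative dE) (at (q, p, s))"
    using has_derivative_qp_sum[where q=q and p=p and s=s] by (simp add: dE_def case_prod_unfold)
  have N: "((\<lambda>x. snd (snd x) $ i * fst (snd x) $ i * (fst x $ i * fst (snd x) $ i - th $ i))
      has_derivative (\<lambda>h. snd (snd h) $ i * p $ i * (q $ i * p $ i - th $ i)
        + s $ i * fst (snd h) $ i * (q $ i * p $ i - th $ i)
        + s $ i * p $ i * (fst h $ i * p $ i + q $ i * fst (snd h) $ i))) (at (q, p, s))"
    by (auto intro!: derivative_eq_intros simp: algebra_simps)
  have D: "((\<lambda>x. (galpha k0 k1 kinf th + qp_sum (fst x) (fst (snd x)))
        * (galpha k0 k1 kinf th + kinf + qp_sum (fst x) (fst (snd x))))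
      has_derivative (\<lambda>h. (A + B) * dE h)) (at (q, p, s))"
    unfolding A_def B_def by (auto intro!: derivative_eq_intros E simp: algebra_simps)
  show ?thesis
    unfolding RtauQ_def Let_def case_prod_unfold A_def[symmetric] B_def[symmetric]
  proof (rule has_derivative_eq_rhs[OF has_derivative_divide'[OF N D]])
    show "(galpha k0 k1 kinf th + qp_sum (fst (q, p, s)) (fst (snd (q, p, s))))
        * (galpha k0 k1 kinf th + kinf + qp_sum (fst (q, p, s)) (fst (snd (q, p, s)))) \<noteq> 0"
      using nonzero by (simp add: A_def B_def)
  qed (use nonzero in \<open>unfold fst_conv snd_conv A_def[symmetric] B_def[symmetric],
         simp add: fun_eq_iff field_simps dE_def\<close>)
qed

lemma garnierH_differentiable:
  assumes "(q, p, s) \<in> garnier_dom k0 k1 kinf th"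
  shows "(\<lambda>(q, p, s). garnierH k0 k1 kinf th q p s i) differentiable at (q, p, s)"
proof -
  have "s $ i \<noteq> 0" "s $ i \<noteq> 1" and distinct: "\<And>j k. j \<noteq> k \<Longrightarrow> s $ j \<noteq> s $ k"
    using assms by (auto simp: garnier_dom_def)
  then show ?thesis
    unfolding differentiable_def garnierH_def Let_def gR_def gS_def galpha_def qp_sum_def case_prod_unfold
    by (intro exI) (auto intro!: derivative_eq_intros dest: distinct)
qed

lemma wedge_d_qp_RtauQ:
  fixes q p s :: "complex^'n::finite"
  assumes dom: "(q, p, s) \<in> garnier_dom k0 k1 kinf th"
  defines "A \<equiv> galpha k0 k1 kinf th + qp_sum q p" and "B \<equiv> galpha k0 k1 kinf th + kinf + qp_sum q p"
  shows "wedge_d (\<lambda>(q, p, s). q $ i * p $ i) (\<lambda>(q, p, s). RtauQ k0 k1 kinf th q p s i) (q, p, s) u v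
        / RtauQ k0 k1 kinf th q p s i
    = wedge_d (\<lambda>(q, p, s). q $ i * p $ i) (\<lambda>(q, p, s). s $ i) (q, p, s) u v / s $ i
      + wedge_d (\<lambda>(q, p, s). q $ i) (\<lambda>(q, p, s). p $ i) (q, p, s) u v
      - (1 / A + 1 / B) * wedge_d (\<lambda>(q, p, s). q $ i * p $ i) (\<lambda>(q, p, s). qp_sum q p) (q, p, s) u v"
proof -
  obtain uq up us where u: "u = (uq, up, us)"
    by (cases u) auto
  obtain vq vp vs where v: "v = (vq, vp, vs)"
    by (cases v) auto
  define Q where "Q = RtauQ k0 k1 kinf th q p s i"
  define c where "c = 1 / A + 1 / B"
  define X where "X = uq $ i * p $ i + q $ i * up $ i"
  define Y where "Y = vq $ i * p $ i + q $ i * vp $ i"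
  define Eu where "Eu = (\<Sum>j\<in>UNIV. uq $ j * p $ j + q $ j * up $ j)"
  define Ev where "Ev = (\<Sum>j\<in>UNIV. vq $ j * p $ j + q $ j * vp $ j)"
  have Q_nonzero: "Q \<noteq> 0" and p_nonzero: "p $ i \<noteq> 0"
    using dom by (auto simp: garnier_dom_def Q_def RtauQ_def Let_def)
  note dw = has_derivative_qp[where q=q and p=p and s=s]
  note dQ = has_derivative_RtauQ[OF dom, folded A_def B_def c_def]
  have p_term: "(X * vp $ i - Y * up $ i) / p $ i = uq $ i * vp $ i - vq $ i * up $ i"
    using p_nonzero by (simp add: X_def Y_def field_simps)
  have "wedge_d (\<lambda>(q, p, s). q $ i * p $ i) (\<lambda>(q, p, s). RtauQ k0 k1 kinf th q p s i) (q, p, s) u v / Q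
    = (X * (Q * (vs $ i / s $ i + vp $ i / p $ i + Y / (q $ i * p $ i - th $ i) - c * Ev))
       - Y * (Q * (us $ i / s $ i + up $ i / p $ i + X / (q $ i * p $ i - th $ i) - c * Eu))) / Q"
    by (simp add: wedge_d_has_derivative[OF dw dQ] u v X_def Y_def Eu_def Ev_def flip: Q_def)
  also have "\<dots> = X * (vs $ i / s $ i + vp $ i / p $ i + Y / (q $ i * p $ i - th $ i) - c * Ev)
       - Y * (us $ i / s $ i + up $ i / p $ i + X / (q $ i * p $ i - th $ i) - c * Eu)"
    using Q_nonzero by (simp add: field_simps)
  also have "\<dots> = (X * vs $ i - Y * us $ i) / s $ i + (X * vp $ i - Y * up $ i) / p $ i
      - c * (X * Ev - Y * Eu)"
    by (simp add: algebra_simps add_divide_distrib diff_divide_distrib)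
  also have "\<dots> = wedge_d (\<lambda>(q, p, s). q $ i * p $ i) (\<lambda>(q, p, s). s $ i) (q, p, s) u v / s $ i
      + wedge_d (\<lambda>(q, p, s). q $ i) (\<lambda>(q, p, s). p $ i) (q, p, s) u v
      - c * wedge_d (\<lambda>(q, p, s). q $ i * p $ i) (\<lambda>(q, p, s). qp_sum q p) (q, p, s) u v"
    unfolding p_term
    by (simp add: wedge_d_has_derivative[OF dw has_derivative_coordinates(3)]
        wedge_d_has_derivative[OF has_derivative_coordinates(1,2)]
        wedge_d_has_derivative[OF dw has_derivative_qp_sum] u v X_def Y_def Eu_def Ev_def)
  finally show ?thesis
    by (simp add: Q_def c_def)
qed

lemma Rtau_two_form_summand:
  fixes q p s :: "complex^'n::finite"
  assumes dom: "(q, p, s) \<in> garnier_dom k0 k1 kinf th"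
  defines "A \<equiv> galpha k0 k1 kinf th + qp_sum q p" and "B \<equiv> galpha k0 k1 kinf th + kinf + qp_sum q p"
  shows "wedge_d (\<lambda>(q, p, s). RtauP k0 k1 kinf th q p s i) (\<lambda>(q, p, s). RtauQ k0 k1 kinf th q p s i)
        (q, p, s) u v
      - wedge_d (\<lambda>(q, p, s). Htilde k0 k1 kinf th q p s i) (\<lambda>(q, p, s). s $ i) (q, p, s) u v
    = wedge_d (\<lambda>(q, p, s). p $ i) (\<lambda>(q, p, s). q $ i) (q, p, s) u v
      - wedge_d (\<lambda>(q, p, s). garnierH k0 k1 kinf th q p s i) (\<lambda>(q, p, s). s $ i) (q, p, s) u v
      + (1 / A + 1 / B) * wedge_d (\<lambda>(q, p, s). q $ i * p $ i) (\<lambda>(q, p, s). qp_sum q p) (q, p, s) u v"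
proof -
  let ?z = "(q, p, s)"
  let ?q = "\<lambda>(q, p, s::complex^'n). q $ i" and ?p = "\<lambda>(q, p, s::complex^'n). p $ i"
    and ?s = "\<lambda>(q::complex^'n, p::complex^'n, s). s $ i"
    and ?w = "\<lambda>(q, p, s::complex^'n). q $ i * p $ i"
    and ?Q = "\<lambda>(q, p, s). RtauQ k0 k1 kinf th q p s i"
    and ?H = "\<lambda>(q, p, s). garnierH k0 k1 kinf th q p s i"
  have s_nonzero: "s $ i \<noteq> 0" and Q_nonzero: "RtauQ k0 k1 kinf th q p s i \<noteq> 0"
    using dom by (auto simp: garnier_dom_def RtauQ_def Let_def)
  have w_diff: "?w differentiable at ?z"
    using has_derivative_qp by (rule differentiableI)
  have Q_diff: "?Q differentiable at ?z"
    using has_derivative_RtauQ[OF dom] by (rule differentiableI)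
  have s_diff: "?s differentiable at ?z"
    using has_derivative_coordinates(3) by (rule differentiableI)
  have "(\<lambda>(q, p, s). RtauP k0 k1 kinf th q p s i) = (\<lambda>x. - ?w x / ?Q x)"
    by (auto simp: RtauP_def)
  then have dP_dQ: "wedge_d (\<lambda>(q, p, s). RtauP k0 k1 kinf th q p s i) ?Q ?z u v
      = - (wedge_d ?w ?Q ?z u v / RtauQ k0 k1 kinf th q p s i)"
    using wedge_d_divide_left[of "\<lambda>x. - ?w x" ?z ?Q] wedge_d_minus_left[OF w_diff] w_diff Q_diff Q_nonzero
    by simp
  have ws_diff: "(\<lambda>x. ?w x / ?s x) differentiable at ?z"
    using w_diff s_diff s_nonzero by (simp add: differentiable_divide)
  have "(\<lambda>(q, p, s). Htilde k0 k1 kinf th q p s i) = (\<lambda>x. ?H x - ?w x / ?s x)"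
    by (auto simp: Htilde_def)
  then have dHt: "wedge_d (\<lambda>(q, p, s). Htilde k0 k1 kinf th q p s i) ?s ?z u v
      = wedge_d ?H ?s ?z u v - wedge_d ?w ?s ?z u v / s $ i"
    using wedge_d_diff_left[OF garnierH_differentiable[OF dom] ws_diff]
      wedge_d_divide_left[OF w_diff s_diff] s_nonzero
    by simp
  show ?thesis
    unfolding dP_dQ wedge_d_qp_RtauQ[OF dom, folded A_def B_def] dHt wedge_d_commute[of ?q ?p ?z u v]
    by (simp add: algebra_simps)
qed

lemma Rtau_preserves_two_form:
  fixes z :: "'n::finite phase_point"
  assumes "z \<in> garnier_dom k0 k1 kinf th"
  shows "(\<Sum>i\<in>UNIV.
          wedge_d (\<lambda>(q, p, s). p $ i) (\<lambda>(q, p, s). q $ i) z u v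
        - wedge_d (\<lambda>(q, p, s). garnierH k0 k1 kinf th q p s i) (\<lambda>(q, p, s). s $ i) z u v)
    = (\<Sum>i\<in>UNIV.
          wedge_d (\<lambda>(q, p, s). RtauP k0 k1 kinf th q p s i)
                  (\<lambda>(q, p, s). RtauQ k0 k1 kinf th q p s i) z u v
        - wedge_d (\<lambda>(q, p, s). Htilde k0 k1 kinf th q p s i) (\<lambda>(q, p, s). s $ i) z u v)"
    (is "(\<Sum>i\<in>UNIV. ?old i) = (\<Sum>i\<in>UNIV. ?new i)")
proof -
  obtain q p s where z: "z = (q, p, s)"
    by (cases z) auto
  let ?w = "\<lambda>i. \<lambda>(q, p, s::complex^'n). q $ i * p $ i" and ?E = "\<lambda>(q, p, s::complex^'n). qp_sum q p"
  define c where "c = 1 / (galpha k0 k1 kinf th + qp_sum q p) + 1 / (galpha k0 k1 kinf th + kinf + qp_sum q p)"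
  have E_sum: "?E = (\<lambda>x. \<Sum>i\<in>UNIV. ?w i x)"
    by (auto simp: qp_sum_def)
  have "?w i differentiable at z" for i
    unfolding z using has_derivative_qp by (rule differentiableI)
  then have "wedge_d (\<lambda>x. \<Sum>i\<in>UNIV. ?w i x) ?E z u v = (\<Sum>i\<in>UNIV. wedge_d (?w i) ?E z u v)"
    by (intro wedge_d_sum_left) auto
  then have vanish: "(\<Sum>i\<in>UNIV. wedge_d (?w i) ?E z u v) = 0"
    unfolding E_sum[symmetric] wedge_d_self by simp
  have "?new i = ?old i + c * wedge_d (?w i) ?E z u v" for i
    unfolding z c_def by (rule Rtau_two_form_summand[OF assms[unfolded z]])
  then have "(\<Sum>i\<in>UNIV. ?new i) = (\<Sum>i\<in>UNIV. ?old i + c * wedge_d (?w i) ?E z u v)"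
    by (intro sum.cong) auto
  also have "\<dots> = (\<Sum>i\<in>UNIV. ?old i)"
    using vanish by (simp add: sum.distrib flip: sum_distrib_left)
  finally show ?thesis
    by (rule sym)
qed

lemma gR_mult_swap: "gR s j i * s $ i = gS s i j * s $ j"
  by (simp add: gR_def gS_def)

lemma Htilde_eq_garnierH_Rtau:
  fixes q p s :: "complex^'n::finite"
  assumes dom: "(q, p, s) \<in> garnier_dom k0 k1 kinf th"
  shows "Htilde k0 k1 kinf th q p s i = garnierH (1 - k0) (1 - k1) (- kinf) (- th)
    (\<chi> j. RtauQ k0 k1 kinf th q p s j) (\<chi> j. RtauP k0 k1 kinf th q p s j) s i"
proof -
  define a where "a = galpha k0 k1 kinf th"
  define E where "E = qp_sum q p"
  define D where "D = (a + E) * (a + kinf + E)"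
  define c where "c j = s $ j * (q $ j * p $ j - th $ j) / D" for j
  define Q where "Q = (\<chi> j. RtauQ k0 k1 kinf th q p s j)"
  define P where "P = (\<chi> j. RtauP k0 k1 kinf th q p s j)"
  have s_nonzero: "s $ j \<noteq> 0" and p_nonzero: "p $ j \<noteq> 0" and c_nonzero: "c j \<noteq> 0"
    and w_ne_th: "q $ j * p $ j - th $ j \<noteq> 0" for j
    using dom by (auto simp: garnier_dom_def c_def D_def a_def E_def)
  have D_nonzero: "D \<noteq> 0"
    using dom by (auto simp: garnier_dom_def D_def a_def E_def)
  have s_ne_1: "s $ i \<noteq> 1"
    using dom by (auto simp: garnier_dom_def)
  have RtauQ_eq: "RtauQ k0 k1 kinf th q p s j = c j * p $ j" for j
    by (simp add: RtauQ_def c_def D_def a_def E_def Let_def)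
  have Q: "Q $ j = c j * p $ j" for j
    by (simp add: Q_def RtauQ_eq)
  have P: "P $ j = - q $ j / c j" for j
    using p_nonzero[of j] by (simp add: P_def RtauP_def RtauQ_eq)
  have QP: "Q $ j * P $ j = - (q $ j * p $ j)" for j
    using c_nonzero[of j] by (simp add: Q P)
  have c_ratio: "c j / c k * (q $ k * p $ k - th $ k) = s $ j / s $ k * (q $ j * p $ j - th $ j)" for j k
    using D_nonzero s_nonzero[of k] w_ne_th[of k] by (simp add: c_def)
  have alpha': "galpha (1 - k0) (1 - k1) (- kinf) (- th) = - a"
    by (simp add: galpha_def a_def sum_negf field_simps)
  have E': "qp_sum Q P = - E"
    by (simp add: qp_sum_def E_def QP sum_negf)
  have cD: "c j * D = s $ j * (q $ j * p $ j - th $ j)" for j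
    using D_nonzero by (simp add: c_def)
  have first_term: "Q $ i * (- a + - E) * (- a + - kinf + - E) = s $ i * p $ i * (q $ i * p $ i - th $ i)"
  proof -
    have "(- a + - E) * (- a + - kinf + - E) = D"
      by (simp add: D_def algebra_simps)
    then show ?thesis
      using cD[of i] by (simp add: Q mult.assoc mult.left_commute)
  qed
  have second_term: "s $ i * P $ i * (Q $ i * P $ i - (- th) $ i) = q $ i * (a + E) * (a + kinf + E)"
  proof -
    have "s $ i * P $ i * (Q $ i * P $ i - (- th) $ i) = q $ i * (s $ i * (q $ i * p $ i - th $ i) / c i)"
      using c_nonzero[of i] by (simp only: QP) (simp add: P field_simps)
    also have "\<dots> = q $ i * D"
      using c_nonzero[of i] by (simp add: cD[symmetric])
    finally show ?thesis
      by (simp add: D_def mult.assoc)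
  qed
  have mixed_R_term: "gR s j i * (Q $ j * P $ j - (- th) $ j) * Q $ i * P $ j
      = gS s i j * (q $ i * p $ i - th $ i) * q $ j * p $ i" for j
  proof -
    have "gR s j i * (Q $ j * P $ j - (- th) $ j) * Q $ i * P $ j
        = gR s j i * (c i / c j * (q $ j * p $ j - th $ j)) * q $ j * p $ i"
      using c_nonzero[of j] by (simp add: QP Q P field_simps)
    also have "\<dots> = gR s j i * (s $ i / s $ j * (q $ i * p $ i - th $ i)) * q $ j * p $ i"
      unfolding c_ratio ..
    also have "\<dots> = gS s i j * (q $ i * p $ i - th $ i) * q $ j * p $ i"
      using gR_mult_swap[of s j i] s_nonzero[of j] by (simp add: field_simps)
    finally show ?thesis .
  qed
  have mixed_S_term: "gS s i j * (Q $ i * P $ i - (- th) $ i) * Q $ j * P $ i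
      = gR s j i * (q $ j * p $ j - th $ j) * q $ i * p $ j" for j
  proof -
    have "gS s i j * (Q $ i * P $ i - (- th) $ i) * Q $ j * P $ i
        = gS s i j * (c j / c i * (q $ i * p $ i - th $ i)) * q $ i * p $ j"
      using c_nonzero[of i] by (simp add: QP Q P field_simps)
    also have "\<dots> = gS s i j * (s $ j / s $ i * (q $ j * p $ j - th $ j)) * q $ i * p $ j"
      unfolding c_ratio ..
    also have "\<dots> = gR s j i * (q $ j * p $ j - th $ j) * q $ i * p $ j"
      using gR_mult_swap[of s j i] s_nonzero[of i] by (simp add: field_simps)
    finally show ?thesis .
  qed
  have QP_assoc: "x * Q $ j * P $ j = - x * (q $ j * p $ j)" for x j
    using QP[of j] by (simp add: mult.assoc)
  show ?thesis
    unfolding Htilde_def garnierH_def Let_def alpha' E' Q_def[symmetric] P_def[symmetric]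
      a_def[symmetric] E_def[symmetric] first_term second_term mixed_R_term mixed_S_term
    unfolding QP QP_assoc
    using s_nonzero[of i] s_ne_1 by (simp add: field_simps)
qed

theorem theorem1p3:
  fixes k0 k1 kinf :: complex and th :: "complex^'n::finite"
  shows
  "(\<forall>z \<in> garnier_dom k0 k1 kinf th. \<forall>u v.
      (\<Sum>i\<in>UNIV.
          wedge_d (\<lambda>(q, p, s). p $ i) (\<lambda>(q, p, s). q $ i) z u v
        - wedge_d (\<lambda>(q, p, s). garnierH k0 k1 kinf th q p s i) (\<lambda>(q, p, s). s $ i) z u v)
    = (\<Sum>i\<in>UNIV.
          wedge_d (\<lambda>(q, p, s). RtauP k0 k1 kinf th q p s i)
                  (\<lambda>(q, p, s). RtauQ k0 k1 kinf th q p s i) z u v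
        - wedge_d (\<lambda>(q, p, s). Htilde k0 k1 kinf th q p s i) (\<lambda>(q, p, s). s $ i) z u v))
   \<and> (\<forall>(q, p, s) \<in> garnier_dom k0 k1 kinf th. \<forall>i.
        Htilde k0 k1 kinf th q p s i =
        garnierH (1 - k0) (1 - k1) (- kinf) (- th)
          (\<chi> j. RtauQ k0 k1 kinf th q p s j) (\<chi> j. RtauP k0 k1 kinf th q p s j) s i)"
  by (auto simp: Rtau_preserves_two_form Htilde_eq_garnierH_Rtau)

end
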